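(* Let $\mathcal D$ be a distribution of $(x,y)\in\mathbb R^d\times\{-1,+1\}$ with $x$ having finite second moments, let $\lambda>0$, and let $w^*$ be a minimizer of $\mathcal L(w)=\mathbb E_{(x,y)\sim\mathcal D}[\max(0,1-yw^\top x)]+\frac{\lambda}{2}\|w\|_2^2$. Suppose the coordinates of $x$ are mutually independent conditionally on $y$. If a coordinate $i$ satisfies $\mathbb E[x_i\mid y=-1]=0=\mathbb E[x_i\mid y=1]$, then $w_i^*=0$. *)

theory Defs
  imports "HOL-Probability.Probability"
begin

definition svm_loss :: "((real^'d) \<times> real) measure \<Rightarrow> real \<Rightarrow> real^'d \<Rightarrow> real" where
  "svm_loss D lam w =
     (\<integral>p. max 0 (1 - snd p * (w \<bullet> fst p)) \<partial>D) + lam / 2 * (norm w)^2"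

text \<open>Conditional distribution of (x,y) given y = c (meaningful when P(y=c) > 0).\<close>
definition cond_dist :: "((real^'d) \<times> real) measure \<Rightarrow> real \<Rightarrow> ((real^'d) \<times> real) measure" where
  "cond_dist D c = uniform_measure D {p \<in> space D. snd p = c}"

end

theory Submission
  imports Defs
begin

text \<open>Let w' be w* with its i-th coordinate set to zero. By convexity of the hinge loss,
  max(0, 1 - y w*.x) \<ge> max(0, 1 - y w'.x) - w*_i y x_i [y w'.x < 1]. Conditionally on y,
  the coordinate x_i is independent of w'.x, which only involves the other coordinates, and has
  mean zero; hence the correction term has expectation zero and the hinge risk of w' is at most
  that of w*. Since |w*|^2 = |w'|^2 + w*_i^2, minimality of w* forces lam/2 w*_i^2 \<le> 0.\<close>

lemma vec_nth_borel_measurable [measurable]: "(\<lambda>x::real^'d. x $ i) \<in> borel_measurable borel"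
  by (intro borel_measurable_continuous_onI continuous_intros)

lemma norm_square_drop_coordinate:
  fixes w :: "real^'d"
  shows "(norm w)^2 = (norm (w - (w $ i) *\<^sub>R axis i 1))^2 + (w $ i)^2"
proof -
  have "orthogonal (w - (w $ i) *\<^sub>R axis i 1) ((w $ i) *\<^sub>R axis i 1)"
    by (simp add: orthogonal_def inner_diff_left inner_axis inner_axis_axis)
  then have "(norm (w - (w $ i) *\<^sub>R axis i 1 + (w $ i) *\<^sub>R axis i 1))^2
      = (norm (w - (w $ i) *\<^sub>R axis i 1))^2 + (norm ((w $ i) *\<^sub>R axis i (1::real)))^2"
    by (rule norm_add_Pythagorean)
  then show ?thesis
    by simp
qed

lemma (in finite_measure) uniform_measure_eq_density:
  assumes "A \<in> sets M" "measure M A > 0"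
  shows "uniform_measure M A = density M (\<lambda>x. ennreal (indicator A x / measure M A))"
  unfolding uniform_measure_def
  by (intro arg_cong[where f="density M"] ext)
     (use assms in \<open>auto simp: emeasure_eq_measure divide_ennreal ennreal_1[symmetric]
        simp del: ennreal_1 split: split_indicator\<close>)

lemma (in finite_measure)
  fixes f :: "'a \<Rightarrow> real"
  assumes A: "A \<in> sets M" "measure M A > 0" and f: "integrable M f"
  shows integrable_uniform_measure: "integrable (uniform_measure M A) f"
    and integral_uniform_measure:
      "(\<integral>x. f x \<partial>uniform_measure M A) = (\<integral>x. indicator A x * f x \<partial>M) / measure M A"
proof -
  have [measurable]: "f \<in> borel_measurable M" "A \<in> sets M"
    using f A by auto
  have weight: "(\<lambda>x. indicator A x / measure M A) \<in> borel_measurable M"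
    by measurable
  have scaled: "(\<lambda>x. (indicator A x / measure M A) *\<^sub>R f x) = (\<lambda>x. indicator A x * f x / measure M A)"
    by auto
  have "integrable M (\<lambda>x. indicator A x * f x)"
    using integrable_mult_indicator[OF A(1) f] by simp
  then show "integrable (uniform_measure M A) f"
    unfolding uniform_measure_eq_density[OF A] by (subst integrable_density) (simp_all add: weight scaled)
  show "(\<integral>x. f x \<partial>uniform_measure M A) = (\<integral>x. indicator A x * f x \<partial>M) / measure M A"
    unfolding uniform_measure_eq_density[OF A] by (subst integral_density) (simp_all add: weight scaled)
qed

lemma (in finite_measure) integral_indicator_eq_0_if_uniform_measure:
  fixes f :: "'a \<Rightarrow> real"
  assumes A: "A \<in> sets M" and f: "integrable M f"
    and cond: "measure M A > 0 \<Longrightarrow> (\<integral>x. f x \<partial>uniform_measure M A) = 0"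
  shows "(\<integral>x. indicator A x * f x \<partial>M) = 0"
proof (cases "measure M A > 0")
  case True
  then show ?thesis
    using cond integral_uniform_measure[OF A True f] by simp
next
  case False
  then have "A \<in> null_sets M"
    using A measure_nonneg[of M A] by (simp add: emeasure_eq_measure null_sets_def)
  then have "AE x in M. indicator A x * f x = 0"
    by (rule AE_mp[OF AE_not_in]) simp
  then show ?thesis
    by (simp add: integral_eq_zero_AE)
qed

lemma (in prob_space) integral_coordinate_mult_indep:
  fixes X :: "'a \<Rightarrow> real^'d" and \<phi> :: "real \<Rightarrow> real"
  assumes indep: "indep_vars (\<lambda>_. borel) (\<lambda>j \<omega>. X \<omega> $ j) UNIV"
    and int: "integrable M (\<lambda>\<omega>. X \<omega> $ i)"
    and \<phi>_measurable [measurable]: "\<phi> \<in> borel_measurable borel"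
    and \<phi>_bounded: "\<And>t. \<bar>\<phi> t\<bar> \<le> B"
    and v: "v $ i = 0"
  shows "(\<integral>\<omega>. X \<omega> $ i * \<phi> (v \<bullet> X \<omega>) \<partial>M) = (\<integral>\<omega>. X \<omega> $ i \<partial>M) * (\<integral>\<omega>. \<phi> (v \<bullet> X \<omega>) \<partial>M)"
proof -
  define K where "K b = (if b then {i} else UNIV - {i})" for b
  define R where "R b \<omega> = restrict (\<lambda>j. X \<omega> $ j) (K b)" for b \<omega>
  have "indep_vars (\<lambda>b. PiM (K b) (\<lambda>_. borel)) R UNIV"
    unfolding R_def by (rule indep_vars_restrict[OF indep]) (auto simp: K_def disjoint_family_on_def)
  then have "indep_var (PiM (K True) (\<lambda>_. borel)) (R True) (PiM (K False) (\<lambda>_. borel)) (R False)"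
    unfolding indep_var_def
    by (rule indep_vars_cong[THEN iffD1, rotated -1]) (auto split: bool.split)
  moreover have "(\<lambda>f. f i) \<in> borel_measurable (PiM (K True) (\<lambda>_. borel))"
    unfolding K_def by measurable
  moreover have "(\<lambda>f. \<phi> (\<Sum>j\<in>UNIV - {i}. v $ j * f j)) \<in> borel_measurable (PiM (K False) (\<lambda>_. borel))"
    unfolding K_def by measurable
  ultimately have "indep_var borel ((\<lambda>f. f i) \<circ> R True) borel ((\<lambda>f. \<phi> (\<Sum>j\<in>UNIV - {i}. v $ j * f j)) \<circ> R False)"
    by (rule indep_var_compose)
  moreover have "v \<bullet> x = (\<Sum>j\<in>UNIV - {i}. v $ j * x $ j)" for x :: "real^'d"
    unfolding inner_vec_def using v by (simp add: sum.remove[of UNIV i])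
  ultimately have indep': "indep_var borel (\<lambda>\<omega>. X \<omega> $ i) borel (\<lambda>\<omega>. \<phi> (v \<bullet> X \<omega>))"
    by (simp add: R_def K_def comp_def)
  have "integrable M (\<lambda>\<omega>. \<phi> (v \<bullet> X \<omega>))"
    by (rule integrable_const_bound[where B=B]) (use \<phi>_bounded indep_var_rv2[OF indep'] in auto)
  with indep' int show ?thesis
    by (rule indep_var_lebesgue_integral)
qed

definition hinge_risk :: "((real^'d) \<times> real) measure \<Rightarrow> real^'d \<Rightarrow> real" where
  "hinge_risk D w = (\<integral>p. max 0 (1 - snd p * (w \<bullet> fst p)) \<partial>D)"

lemma svm_loss_eq_hinge_risk: "svm_loss D lam w = hinge_risk D w + lam / 2 * (norm w)^2"
  unfolding svm_loss_def hinge_risk_def ..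

lemma hinge_subgradient_ineq:
  fixes y u t a :: real
  shows "max 0 (1 - y * u) - a * (y * t * (if y * u < 1 then 1 else 0)) \<le> max 0 (1 - y * (u + a * t))"
  by (auto simp: algebra_simps)

lemma integrable_hinge:
  fixes D :: "((real^'d) \<times> real) measure"
  assumes "prob_space D" "sets D = sets borel" "AE p in D. snd p \<in> {-1, 1}"
    and "integrable D (\<lambda>p. norm (fst p))"
  shows "integrable D (\<lambda>p. max 0 (1 - snd p * (w \<bullet> fst p)))"
proof (rule Bochner_Integration.integrable_bound)
  interpret prob_space D by fact
  note [measurable_cong] = assms(2)[unfolded borel_prod[symmetric]]
  show "integrable D (\<lambda>p. 1 + norm w * norm (fst p))"
    using assms(4) by simp
  show "(\<lambda>p. max 0 (1 - snd p * (w \<bullet> fst p))) \<in> borel_measurable D"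
    by measurable
  show "AE p in D. norm (max 0 (1 - snd p * (w \<bullet> fst p))) \<le> norm (1 + norm w * norm (fst p))"
    using assms(3)
  proof eventually_elim
    case (elim p)
    have "\<bar>w \<bullet> fst p\<bar> \<le> norm w * norm (fst p)"
      by (rule Cauchy_Schwarz_ineq2)
    with elim show ?case
      by auto
  qed
qed

lemma integral_label_coordinate_active_eq_0:
  fixes D :: "((real^'d) \<times> real) measure"
  assumes D: "prob_space D" "sets D = sets borel" "AE p in D. snd p \<in> {-1, 1}"
    and int: "integrable D (\<lambda>p. fst p $ i)"
    and indep: "\<forall>c\<in>{-1, 1::real}. measure D {p \<in> space D. snd p = c} > 0 \<longrightarrow>
           prob_space.indep_vars (cond_dist D c) (\<lambda>_. borel) (\<lambda>j p. fst p $ j) UNIV"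
    and mean: "\<forall>c\<in>{-1, 1::real}. measure D {p \<in> space D. snd p = c} > 0 \<longrightarrow>
           (\<integral>p. fst p $ i \<partial>(cond_dist D c)) = 0"
    and v: "v $ i = 0"
  shows "(\<integral>p. snd p * fst p $ i * (if snd p * (v \<bullet> fst p) < 1 then 1 else 0) \<partial>D) = 0"
proof -
  interpret prob_space D by fact
  note [measurable_cong] = D(2)[unfolded borel_prod[symmetric]]
  define A where "A c = {p \<in> space D. snd p = c}" for c
  define h where "h c p = fst p $ i * (if c * (v \<bullet> fst p) < 1 then 1 else (0::real))"
    for c and p :: "(real^'d) \<times> real"
  have A [measurable]: "A c \<in> sets D" for c
    unfolding A_def by measurable
  have h [measurable]: "h c \<in> borel_measurable D" for c
    unfolding h_def by measurable
  have int_h: "integrable D (h c)" for c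
    by (rule Bochner_Integration.integrable_bound[OF int h]) (auto simp: h_def)
  have cond_zero: "(\<integral>p. indicator (A c) p * h c p \<partial>D) = 0" if "c \<in> {-1, 1}" for c
  proof (rule integral_indicator_eq_0_if_uniform_measure[OF A int_h])
    assume pos: "measure D (A c) > 0"
    have cond: "cond_dist D c = uniform_measure D (A c)"
      unfolding cond_dist_def A_def ..
    interpret C: prob_space "cond_dist D c"
      unfolding cond by (rule prob_space_uniform_measure) (use pos in \<open>auto simp: emeasure_eq_measure\<close>)
    have "(\<integral>p. h c p \<partial>cond_dist D c)
        = (\<integral>p. fst p $ i \<partial>cond_dist D c) * (\<integral>p. (if c * (v \<bullet> fst p) < 1 then 1 else 0) \<partial>cond_dist D c)"
      unfolding h_def
    proof (rule C.integral_coordinate_mult_indep[where B=1, OF _ _ _ _ v])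
      show "C.indep_vars (\<lambda>_. borel) (\<lambda>j p. fst p $ j) UNIV"
        using indep that pos by (auto simp: A_def)
      show "integrable (cond_dist D c) (\<lambda>p. fst p $ i)"
        unfolding cond using integrable_uniform_measure[OF A pos int] .
    qed auto
    moreover have "(\<integral>p. fst p $ i \<partial>cond_dist D c) = 0"
      using mean that pos by (auto simp: A_def)
    ultimately show "(\<integral>p. h c p \<partial>uniform_measure D (A c)) = 0"
      unfolding cond by simp
  qed
  have "AE p in D. snd p * fst p $ i * (if snd p * (v \<bullet> fst p) < 1 then 1 else 0)
      = indicator (A 1) p * h 1 p - indicator (A (-1)) p * h (-1) p"
    using D(3) AE_space by eventually_elim (auto simp: h_def A_def split: split_indicator)
  then have "(\<integral>p. snd p * fst p $ i * (if snd p * (v \<bullet> fst p) < 1 then 1 else 0) \<partial>D)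
      = (\<integral>p. indicator (A 1) p * h 1 p - indicator (A (-1)) p * h (-1) p \<partial>D)"
    by (rule integral_cong_AE[rotated 2]) measurable
  also have "\<dots> = 0"
    using cond_zero[of 1] cond_zero[of "-1"] integrable_mult_indicator[OF A int_h]
    by simp
  finally show ?thesis .
qed

lemma hinge_risk_drop_coordinate_le:
  fixes D :: "((real^'d) \<times> real) measure"
  assumes D: "prob_space D" "sets D = sets borel" "AE p in D. snd p \<in> {-1, 1}"
    and int: "integrable D (\<lambda>p. norm (fst p))"
    and indep: "\<forall>c\<in>{-1, 1::real}. measure D {p \<in> space D. snd p = c} > 0 \<longrightarrow>
           prob_space.indep_vars (cond_dist D c) (\<lambda>_. borel) (\<lambda>j p. fst p $ j) UNIV"
    and mean: "\<forall>c\<in>{-1, 1::real}. measure D {p \<in> space D. snd p = c} > 0 \<longrightarrow>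
           (\<integral>p. fst p $ i \<partial>(cond_dist D c)) = 0"
  shows "hinge_risk D (w - (w $ i) *\<^sub>R axis i 1) \<le> hinge_risk D w"
proof -
  interpret prob_space D by fact
  note [measurable_cong] = D(2)[unfolded borel_prod[symmetric]]
  define w' where "w' = w - (w $ i) *\<^sub>R axis i 1"
  \<comment> \<open>minus the i-th coordinate of a subgradient of the hinge loss at w'\<close>
  define k where "k p = snd p * fst p $ i * (if snd p * (w' \<bullet> fst p) < 1 then 1 else 0)"
    for p :: "(real^'d) \<times> real"
  have w'_i: "w' $ i = 0"
    by (simp add: w'_def)
  have inner_w: "w \<bullet> x = w' \<bullet> x + w $ i * x $ i" for x :: "real^'d"
    by (simp add: w'_def inner_diff_left inner_axis')
  have int_coord: "integrable D (\<lambda>p. fst p $ i)"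
    by (rule Bochner_Integration.integrable_bound[OF int])
       (auto simp: component_le_norm_cart)
  have int_k: "integrable D k"
  proof (rule Bochner_Integration.integrable_bound[OF int_coord])
    show "k \<in> borel_measurable D"
      unfolding k_def by measurable
    show "AE p in D. norm (k p) \<le> norm (fst p $ i)"
      using D(3) by eventually_elim (auto simp: k_def)
  qed
  have k_0: "integral\<^sup>L D k = 0"
    unfolding k_def by (rule integral_label_coordinate_active_eq_0[OF D int_coord indep mean w'_i])
  have int_hinge: "integrable D (\<lambda>p. max 0 (1 - snd p * (u \<bullet> fst p)))" for u
    by (rule integrable_hinge[OF D int])
  have "hinge_risk D w' = (\<integral>p. max 0 (1 - snd p * (w' \<bullet> fst p)) - w $ i * k p \<partial>D)"
    using int_hinge int_k k_0 by (simp add: hinge_risk_def)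
  also have "\<dots> \<le> hinge_risk D w"
    unfolding hinge_risk_def
  proof (rule integral_mono[OF _ int_hinge])
    show "integrable D (\<lambda>p. max 0 (1 - snd p * (w' \<bullet> fst p)) - w $ i * k p)"
      using int_hinge int_k by simp
    show "max 0 (1 - snd p * (w' \<bullet> fst p)) - w $ i * k p \<le> max 0 (1 - snd p * (w \<bullet> fst p))" for p
      unfolding k_def inner_w by (rule hinge_subgradient_ineq)
  qed
  finally show ?thesis
    unfolding w'_def .
qed

theorem mainTheorem2:
  fixes D :: "((real^'d) \<times> real) measure" and lam :: real
    and wstar :: "real^'d" and i :: 'd
  assumes "prob_space D"
    and "sets D = sets borel"
    and "AE p in D. snd p \<in> {-1, 1}"
    and "integrable D (\<lambda>p. (norm (fst p))^2)"
    and "lam > 0"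
    and "\<forall>w. svm_loss D lam wstar \<le> svm_loss D lam w"
    and "\<forall>c\<in>{-1, 1::real}. measure D {p \<in> space D. snd p = c} > 0 \<longrightarrow>
           prob_space.indep_vars (cond_dist D c) (\<lambda>_. borel) (\<lambda>j p. fst p $ j) UNIV"
    and "\<forall>c\<in>{-1, 1::real}. measure D {p \<in> space D. snd p = c} > 0 \<longrightarrow>
           (\<integral>p. fst p $ i \<partial>(cond_dist D c)) = 0"
  shows "wstar $ i = 0"
proof -
  interpret prob_space D by fact
  note [measurable_cong] = assms(2)[unfolded borel_prod[symmetric]]
  define w where "w = wstar - (wstar $ i) *\<^sub>R axis i 1"
  have "integrable D (\<lambda>p. norm (fst p))"
    by (rule square_integrable_imp_integrable[OF _ assms(4)]) measurable
  then have "hinge_risk D w \<le> hinge_risk D wstar"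
    unfolding w_def by (rule hinge_risk_drop_coordinate_le[OF assms(1-3) _ assms(7,8)])
  moreover have "(norm wstar)^2 = (norm w)^2 + (wstar $ i)^2"
    unfolding w_def by (rule norm_square_drop_coordinate)
  moreover have "svm_loss D lam wstar \<le> svm_loss D lam w"
    using assms(6) by blast
  ultimately have "lam / 2 * (wstar $ i)^2 \<le> 0"
    by (simp add: svm_loss_eq_hinge_risk algebra_simps)
  with \<open>lam > 0\<close> show ?thesis
    by (simp add: mult_le_0_iff)
qed

end
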